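(* Let $k$ be a positive integer and let $p$ be the smallest positive integer such that $k<\kappa_p$ (in dimension $2$). Assume $p$ is a multiple of $4$. If $k-\kappa_{p-1}$ is not an odd multiple of $p/2$, then there exists a subset $\mathcal{X}$ of $\mathbb{P}^2_\circ$ with $\kappa(\mathcal{X})\le k$ and $|\mathcal{X}|=\lfloor\lambda(2,k)\rfloor$. Otherwise, there exists a subset $\mathcal{X}$ of $\mathbb{P}^2_\circ$ with $\kappa(\mathcal{X})\le k$ and $|\mathcal{X}|=\lfloor\lambda(2,k)\rfloor-1$.
   Context: A point of $\mathbb{Z}^2$ is primitive if its coordinates are relatively prime; $\mathbb{P}^2_\circ$ denotes the set of primitive points of $\mathbb{Z}^2$ whose first non-zero coordinate is positive. For a finite $\mathcal{X}\subset\mathbb{R}^2$, $\kappa(\mathcal{X})=\max_{i\in\{1,2\}}\sum_{x\in\mathcal{X}}|x_i|$. $B(2,p)=\{x\in\mathbb{R}^2:\|x\|_1\le p\}$; $N_p=|B(2,p)\cap\mathbb{P}^2_\circ|$ and $\kappa_p=\kappa(B(2,p)\cap\mathbb{P}^2_\circ)$ (with $N_0=\kappa_0=0$). With $p$ as in the claim, $\lambda(2,k)=N_{p-1}+\frac{2(k-\kappa_{p-1})}{p}$. *)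

theory Defs
  imports Complex_Main
begin

definition primitive :: "int \<times> int \<Rightarrow> bool" where
  "primitive x \<longleftrightarrow> gcd (fst x) (snd x) = 1"

definition P2o :: "(int \<times> int) set" where
  "P2o = {x. primitive x \<and> (fst x > 0 \<or> (fst x = 0 \<and> snd x > 0))}"

definition kappa :: "(int \<times> int) set \<Rightarrow> int" where
  "kappa X = max (\<Sum>x\<in>X. \<bar>fst x\<bar>) (\<Sum>x\<in>X. \<bar>snd x\<bar>)"

definition ballP :: "nat \<Rightarrow> (int \<times> int) set" where
  "ballP p = {x \<in> P2o. \<bar>fst x\<bar> + \<bar>snd x\<bar> \<le> int p}"

definition N2 :: "nat \<Rightarrow> nat" where
  "N2 p = card (ballP p)"

definition kappa2 :: "nat \<Rightarrow> int" where
  "kappa2 p = kappa (ballP p)"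

definition lambda2 :: "nat \<Rightarrow> nat \<Rightarrow> real" where
  "lambda2 k p = real (N2 (p - 1)) + 2 * (real k - real_of_int (kappa2 (p - 1))) / real p"

end

theory Submission
  imports Defs
begin

text \<open>For p > 2 the diagonal reflection (a, b) \<mapsto> (b, a), renormalised into P^2_o, is a
  fixed-point-free involution of the primitive points of l1-norm exactly p, and it swaps the two
  coordinate sums. So every reflection-closed set of 2t such points raises both coordinate sums of
  B(2, p - 1) by exactly pt; in particular \<kappa>_p \<le> \<kappa>_{p-1} + p N/2 for the number N of
  such points. With r = k - \<kappa>_{p-1} and m = \<lfloor>2r/p\<rfloor> < N one can therefore add m points
  (m even) or m - 1 points (m odd). If m is odd but 2r is not a multiple of p, the remainder
  2r - mp is even, hence at least 2, and pays for one extra point (p/2 + 1, p/2 - 1) next to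
  (m - 1)/2 reflection pairs; that point is primitive precisely because p/2 is even.\<close>

definition sphereP :: "nat \<Rightarrow> (int \<times> int) set" where
  "sphereP p = {x \<in> P2o. \<bar>fst x\<bar> + \<bar>snd x\<bar> = int p}"

definition diag_reflect :: "int \<times> int \<Rightarrow> int \<times> int" where
  "diag_reflect x = (if snd x > 0 then (snd x, fst x) else (- snd x, - fst x))"

lemma finite_ballP: "finite (ballP p)"
proof -
  have "ballP p \<subseteq> {- int p..int p} \<times> {- int p..int p}"
    unfolding ballP_def by auto
  then show ?thesis
    by (rule finite_subset) auto
qed

lemma sphereP_subset_ballP: "sphereP p \<subseteq> ballP p"
  unfolding sphereP_def ballP_def by auto

lemma finite_sphereP: "finite (sphereP p)"
  using finite_subset[OF sphereP_subset_ballP finite_ballP] .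

lemma ballP_eq_Un_sphereP: "0 < p \<Longrightarrow> ballP p = ballP (p - 1) \<union> sphereP p"
  unfolding ballP_def sphereP_def by auto

lemma ballP_Int_sphereP: "ballP (p - 1) \<inter> sphereP p = {}"
  unfolding ballP_def sphereP_def P2o_def by auto

lemma kappa_Un_le:
  assumes "finite A" "finite B" "A \<inter> B = {}"
  shows "kappa (A \<union> B) \<le> kappa A + kappa B"
  using assms unfolding kappa_def by (simp add: sum.union_disjoint add_mono)

lemma kappa_singleton: "kappa {x} = max \<bar>fst x\<bar> \<bar>snd x\<bar>"
  unfolding kappa_def by simp

lemma
  assumes "x \<in> sphereP p" "1 < p"
  shows sphereP_fst_pos: "0 < fst x" and sphereP_snd_nonzero: "snd x \<noteq> 0"
  using assms unfolding sphereP_def P2o_def primitive_def by (cases x; auto)+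

lemma abs_fst_diag_reflect [simp]: "\<bar>fst (diag_reflect x)\<bar> = \<bar>snd x\<bar>"
  and abs_snd_diag_reflect [simp]: "\<bar>snd (diag_reflect x)\<bar> = \<bar>fst x\<bar>"
  unfolding diag_reflect_def by auto

lemma diag_reflect_in_sphereP:
  assumes "x \<in> sphereP p" "1 < p"
  shows "diag_reflect x \<in> sphereP p"
  using assms sphereP_fst_pos[OF assms] sphereP_snd_nonzero[OF assms]
  unfolding sphereP_def P2o_def primitive_def diag_reflect_def
  by (auto simp: gcd.commute)

lemma diag_reflect_diag_reflect:
  assumes "x \<in> sphereP p" "1 < p"
  shows "diag_reflect (diag_reflect x) = x"
  using sphereP_fst_pos[OF assms] sphereP_snd_nonzero[OF assms] unfolding diag_reflect_def by auto

lemma diag_reflect_neq: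
  assumes "x \<in> sphereP p" "2 < p"
  shows "diag_reflect x \<noteq> x"
  using assms sphereP_fst_pos[OF assms(1)] sphereP_snd_nonzero[OF assms(1)]
  unfolding sphereP_def P2o_def primitive_def diag_reflect_def
  by (cases x) (auto split: if_splits)

lemma exists_involution_closed_subset:
  assumes "finite L"
    and "\<And>x. x \<in> L \<Longrightarrow> \<sigma> x \<in> L" "\<And>x. x \<in> L \<Longrightarrow> \<sigma> (\<sigma> x) = x"
    and "\<And>x. x \<in> L \<Longrightarrow> \<sigma> x \<noteq> x"
    and "2 * t \<le> card L"
  shows "\<exists>S\<subseteq>L. card S = 2 * t \<and> \<sigma> ` S \<subseteq> S"
  using assms(5)
proof (induction t)
  case 0
  show ?case by (intro exI[of _ "{}"]) simp
next
  case (Suc t)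
  then obtain S where S: "S \<subseteq> L" "card S = 2 * t" "\<sigma> ` S \<subseteq> S"
    by auto
  have "finite S"
    using S(1) assms(1) finite_subset by blast
  have "card S < card L"
    using Suc.prems S(2) by simp
  then have "\<not> L \<subseteq> S"
    using card_mono[OF \<open>finite S\<close>, of L] by linarith
  then obtain x where x: "x \<in> L" "x \<notin> S"
    by blast
  have "\<sigma> x \<notin> S"
    using x S(3) assms(3) by (metis image_subset_iff)
  then show ?case
    using S x \<open>finite S\<close> assms(2,3,4)[OF x(1)]
    by (intro exI[of _ "insert x (insert (\<sigma> x) S)"]) auto
qed

lemma kappa_diag_reflect_closed:
  assumes "S \<subseteq> sphereP p" "diag_reflect ` S \<subseteq> S" "1 < p"
  shows "2 * kappa S = int p * int (card S)"
proof -
  have "finite S"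
    using assms(1) finite_sphereP finite_subset by blast
  have "(\<Sum>x\<in>S. \<bar>snd x\<bar>) = (\<Sum>x\<in>S. \<bar>fst x\<bar>)"
    by (rule sum.reindex_bij_witness[of _ diag_reflect diag_reflect])
      (use assms diag_reflect_diag_reflect in auto)
  moreover have "(\<Sum>x\<in>S. \<bar>fst x\<bar>) + (\<Sum>x\<in>S. \<bar>snd x\<bar>) = int p * int (card S)"
  proof -
    have "(\<Sum>x\<in>S. \<bar>fst x\<bar>) + (\<Sum>x\<in>S. \<bar>snd x\<bar>) = (\<Sum>x\<in>S. int p)"
      unfolding sum.distrib[symmetric] using assms(1) by (intro sum.cong) (auto simp: sphereP_def)
    then show ?thesis by simp
  qed
  ultimately show ?thesis
    unfolding kappa_def by simp
qed

lemma exists_sphereP_subset_kappa: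
  assumes "L \<subseteq> sphereP p" "diag_reflect ` L \<subseteq> L" "2 < p" "2 * t \<le> card L"
  shows "\<exists>S\<subseteq>L. card S = 2 * t \<and> kappa S = int p * int t"
proof -
  have "finite L"
    using assms(1) finite_sphereP finite_subset by blast
  have reflect_L: "diag_reflect x \<in> L" "diag_reflect (diag_reflect x) = x"
    "diag_reflect x \<noteq> x" if "x \<in> L" for x
  proof -
    have "x \<in> sphereP p"
      using that assms(1) by blast
    then show "diag_reflect x \<in> L" "diag_reflect (diag_reflect x) = x" "diag_reflect x \<noteq> x"
      using that assms(2,3) diag_reflect_diag_reflect diag_reflect_neq by auto
  qed
  obtain S where S: "S \<subseteq> L" "card S = 2 * t" "diag_reflect ` S \<subseteq> S"
    using exists_involution_closed_subset[OF \<open>finite L\<close> reflect_L assms(4)] by blast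
  then have "2 * kappa S = int p * (2 * int t)"
    using kappa_diag_reflect_closed[of S p] assms by auto
  then show ?thesis
    using S by auto
qed

lemma kappa2_le_step:
  assumes "1 < p"
  shows "2 * kappa2 p \<le> 2 * kappa2 (p - 1) + int p * int (card (sphereP p))"
proof -
  have "ballP p = ballP (p - 1) \<union> sphereP p"
    using assms by (intro ballP_eq_Un_sphereP) simp
  then have "kappa2 p \<le> kappa2 (p - 1) + kappa (sphereP p)"
    unfolding kappa2_def by (metis kappa_Un_le finite_ballP finite_sphereP ballP_Int_sphereP)
  moreover have "2 * kappa (sphereP p) = int p * int (card (sphereP p))"
    using assms diag_reflect_in_sphereP by (intro kappa_diag_reflect_closed) auto
  ultimately show ?thesis by linarith
qed

lemma gcd_succ_pred_even: "even (h :: int) \<Longrightarrow> gcd (h + 1) (h - 1) = 1"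
proof -
  assume "even h"
  have "gcd (h + 1) (h - 1) = gcd 2 (h - 1)"
    using gcd_add1[of 2 "h - 1"] by (simp add: add.commute)
  then show ?thesis
    using \<open>even h\<close> by (simp add: gcd.commute)
qed

lemma near_diagonal_in_sphereP:
  assumes "4 dvd p" "0 < p"
  shows "(int p div 2 + 1, int p div 2 - 1) \<in> sphereP p"
proof -
  obtain c where c: "p = 4 * c" "0 < c"
    using assms by (auto elim: dvdE)
  define h where "h = 2 * int c"
  have "int p div 2 = h"
    using c by (simp add: h_def)
  moreover have "gcd (h + 1) (h - 1) = 1"
    by (rule gcd_succ_pred_even) (simp add: h_def)
  ultimately show ?thesis
    using c unfolding sphereP_def P2o_def primitive_def h_def by simp
qed

lemma exists_sphereP_subset_odd:
  assumes "4 dvd p" "0 < p" "2 * t + 2 \<le> card (sphereP p)"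
  shows "\<exists>S\<subseteq>sphereP p. card S = 2 * t + 1 \<and> 2 * kappa S \<le> int p * (2 * int t + 1) + 2"
proof -
  define u where "u = (int p div 2 + 1, int p div 2 - 1)"
  have "2 < p"
    using assms(1,2) dvd_imp_le by fastforce
  have u: "u \<in> sphereP p"
    unfolding u_def using assms(1,2) by (rule near_diagonal_in_sphereP)
  have u': "diag_reflect u \<in> sphereP p" "diag_reflect u \<noteq> u"
    using u \<open>2 < p\<close> diag_reflect_in_sphereP diag_reflect_neq by auto
  define L where "L = sphereP p - {u, diag_reflect u}"
  have "card L = card (sphereP p) - 2"
    unfolding L_def using u u' finite_sphereP by (simp add: card_Diff_subset)
  have "diag_reflect x \<in> L" if "x \<in> L" for x
  proof -
    have "x \<in> sphereP p" "x \<noteq> u" "x \<noteq> diag_reflect u"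
      using that unfolding L_def by auto
    then show ?thesis
      unfolding L_def using \<open>2 < p\<close> u diag_reflect_in_sphereP
        diag_reflect_diag_reflect[of x p] diag_reflect_diag_reflect[of u p] by auto
  qed
  then have "diag_reflect ` L \<subseteq> L"
    by blast
  moreover have "L \<subseteq> sphereP p" "2 * t \<le> card L"
    using assms(3) \<open>card L = _\<close> unfolding L_def by auto
  ultimately obtain S where S: "S \<subseteq> L" "card S = 2 * t" "kappa S = int p * int t"
    using exists_sphereP_subset_kappa[of L p t] \<open>2 < p\<close> by blast
  have "u \<notin> S" "S \<subseteq> sphereP p"
    using S(1) unfolding L_def by auto
  then have "finite S"
    using finite_sphereP finite_subset by blast
  have "kappa (insert u S) \<le> kappa S + kappa {u}"
    using kappa_Un_le[of S "{u}"] \<open>finite S\<close> \<open>u \<notin> S\<close> by simp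
  moreover have "2 * kappa {u} = int p + 2"
  proof -
    obtain c where "p = 4 * c"
      using assms(1) by (elim dvdE)
    then have "2 * (int p div 2) = int p"
      by simp
    then show ?thesis
      using \<open>2 < p\<close> unfolding kappa_singleton u_def by simp
  qed
  ultimately have "2 * kappa (insert u S) \<le> int p * (2 * int t + 1) + 2"
    using S(3) by (simp add: algebra_simps)
  moreover have "card (insert u S) = 2 * t + 1"
    using S(2) \<open>finite S\<close> \<open>u \<notin> S\<close> by simp
  ultimately show ?thesis
    using \<open>S \<subseteq> sphereP p\<close> u by (intro exI[of _ "insert u S"]) auto
qed

lemma odd_multiple_iff:
  fixes a d :: int
  assumes "d \<noteq> 0"
  shows "(\<exists>m. odd m \<and> a = m * d) \<longleftrightarrow> d dvd a \<and> odd (a div d)"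
  using assms by (auto simp: dvd_def)

lemma floor_lambda2:
  "\<lfloor>lambda2 k p\<rfloor> = int (N2 (p - 1)) + 2 * (int k - kappa2 (p - 1)) div int p"
  unfolding lambda2_def
  using floor_divide_of_int_eq[of "2 * (int k - kappa2 (p - 1))" "int p", where 'a = real]
  by simp

lemma exists_sphereP_subset_within_budget:
  fixes r :: int
  assumes "4 dvd p" "0 < p" "0 \<le> r" "2 * r < int p * int (card (sphereP p))"
  defines "m \<equiv> 2 * r div int p"
  shows "\<exists>S\<subseteq>sphereP p. kappa S \<le> r \<and>
    int (card S) = (if odd m \<and> int p dvd 2 * r then m - 1 else m)"
proof -
  have "2 < p"
    using assms(1,2) dvd_imp_le by fastforce
  have closed: "diag_reflect ` sphereP p \<subseteq> sphereP p"
    using \<open>2 < p\<close> diag_reflect_in_sphereP by auto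
  have div_mod: "2 * r = m * int p + 2 * r mod int p" "0 \<le> 2 * r mod int p"
    unfolding m_def using assms(2) by simp_all
  then have "int p * m < int p * int (card (sphereP p))"
    using assms(4) by (simp add: mult.commute)
  then have m_less: "m < int (card (sphereP p))"
    by (simp add: mult_less_cancel_left_pos assms(2))
  have "0 \<le> m"
    unfolding m_def using assms(2,3) by (simp add: pos_imp_zdiv_nonneg_iff)
  then obtain n where n: "m = int n"
    using nonneg_int_cases by blast
  show ?thesis
  proof (cases "odd n \<and> \<not> int p dvd 2 * r")
    case False
    define t where "t = n div 2"
    have "2 * t \<le> n"
      unfolding t_def by linarith
    then have "2 * t \<le> card (sphereP p)"
      using m_less n by linarith
    then obtain S where S: "S \<subseteq> sphereP p" "card S = 2 * t" "kappa S = int p * int t"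
      using exists_sphereP_subset_kappa[OF order_refl closed \<open>2 < p\<close>] by blast
    have "int (card S) = (if odd n then int n - 1 else int n)"
      using S(2) unfolding t_def by (auto elim!: oddE)
    then have "int (card S) = (if odd m \<and> int p dvd 2 * r then m - 1 else m)"
      using False n by auto
    moreover have "int p * (2 * int t) \<le> int p * m"
      using n \<open>2 * t \<le> n\<close> by (intro mult_left_mono) simp_all
    then have "kappa S \<le> r"
      using S(3) div_mod by (simp add: algebra_simps)
    ultimately show ?thesis
      using S(1) by blast
  next
    case True
    then obtain t where t: "n = 2 * t + 1"
      by (meson oddE)
    obtain c where "p = 4 * c"
      using assms(1) by (elim dvdE)
    then have "even (2 * r mod int p)"
      by (intro dvd_mod) simp_all
    moreover have "2 * r mod int p \<noteq> 0"
      using True by (simp add: dvd_eq_mod_eq_0)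
    ultimately have "2 \<le> 2 * r mod int p"
      using div_mod(2) by (auto elim!: evenE)
    obtain S where "S \<subseteq> sphereP p" "card S = 2 * t + 1"
      "2 * kappa S \<le> int p * (2 * int t + 1) + 2"
      using exists_sphereP_subset_odd[OF assms(1,2), of t] m_less n t by auto
    then show ?thesis
      using \<open>2 \<le> 2 * r mod int p\<close> div_mod(1) n t True
      by (intro exI[of _ S]) (auto simp: algebra_simps)
  qed
qed

lemma ballP_Un_sphereP_subset:
  assumes "S \<subseteq> sphereP p"
  shows "ballP (p - 1) \<union> S \<subseteq> P2o" "finite (ballP (p - 1) \<union> S)"
    and "kappa (ballP (p - 1) \<union> S) \<le> kappa2 (p - 1) + kappa S"
    and "card (ballP (p - 1) \<union> S) = N2 (p - 1) + card S"
proof -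
  have "finite S" "ballP (p - 1) \<inter> S = {}"
    using assms finite_sphereP finite_subset ballP_Int_sphereP by blast+
  then show "kappa (ballP (p - 1) \<union> S) \<le> kappa2 (p - 1) + kappa S"
    and "card (ballP (p - 1) \<union> S) = N2 (p - 1) + card S"
    unfolding kappa2_def N2_def by (simp_all add: kappa_Un_le finite_ballP card_Un_disjoint)
  show "ballP (p - 1) \<union> S \<subseteq> P2o" "finite (ballP (p - 1) \<union> S)"
    using assms \<open>finite S\<close> finite_ballP unfolding ballP_def sphereP_def by auto
qed

theorem lemma5p1:
  fixes k p :: nat
  assumes "k > 0"
    and "p > 0" and "int k < kappa2 p"
    and "\<forall>q. 0 < q \<and> q < p \<longrightarrow> \<not> (int k < kappa2 q)"
    and "4 dvd p"
  shows "(\<not> (\<exists>m::int. odd m \<and> 2 * (int k - kappa2 (p - 1)) = m * int p)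
            \<longrightarrow> (\<exists>X. X \<subseteq> P2o \<and> finite X \<and> kappa X \<le> int k
                     \<and> int (card X) = \<lfloor>lambda2 k p\<rfloor>))
       \<and> ((\<exists>m::int. odd m \<and> 2 * (int k - kappa2 (p - 1)) = m * int p)
            \<longrightarrow> (\<exists>X. X \<subseteq> P2o \<and> finite X \<and> kappa X \<le> int k
                     \<and> int (card X) = \<lfloor>lambda2 k p\<rfloor> - 1))"
proof -
  define r where "r = int k - kappa2 (p - 1)"
  have "4 \<le> p"
    using assms(2,5) by (simp add: dvd_imp_le)
  have "0 \<le> r"
    using assms(4)[rule_format, of "p - 1"] \<open>4 \<le> p\<close> unfolding r_def by simp
  moreover have "2 * r < int p * int (card (sphereP p))"
    using kappa2_le_step[of p] assms(3) \<open>4 \<le> p\<close> unfolding r_def by simp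
  ultimately obtain S where S: "S \<subseteq> sphereP p" "kappa S \<le> r"
    "int (card S) = (if odd (2 * r div int p) \<and> int p dvd 2 * r
                     then 2 * r div int p - 1 else 2 * r div int p)"
    using exists_sphereP_subset_within_budget[OF assms(5,2)] by blast
  moreover have "(\<exists>m. odd m \<and> 2 * r = m * int p) \<longleftrightarrow> int p dvd 2 * r \<and> odd (2 * r div int p)"
    using assms(2) by (intro odd_multiple_iff) simp
  ultimately show ?thesis
    using ballP_Un_sphereP_subset[OF S(1)] floor_lambda2[of k p] unfolding r_def
    by (auto intro!: exI[of _ "ballP (p - 1) \<union> S"])
qed

end
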